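(* Let $S$ be a set of $n\ge 3$ points in the plane in general position (no four points of $S$ cocircular, no three collinear). For $i=0,\dots,n-3$ let $c_i$ be the number of 3-element subsets $\{a,b,c\}\subseteq S$ whose circumscribed circle contains exactly $i$ points of $S$ in its interior. Then for every $i\in\{0,\dots,n-3\}$, $$c_i+c_{n-i-3} = 2(i+1)(n-2-i).$$ In particular this sum is independent of the positions of the points of $S$.
   Context: Under the general position assumption every three points of $S$ determine a unique circle passing through them, and no other point of $S$ lies on it; the order of such a circle is the number of points of $S$ strictly inside it. *)

theory Defs
  imports "HOL-Analysis.Analysis"
begin

definition cocircular :: "complex set \<Rightarrow> bool" where
  "cocircular A \<longleftrightarrow> (\<exists>z r. \<forall>p\<in>A. dist p z = r)"

definition general_position :: "complex set \<Rightarrow> bool" where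
  "general_position S \<longleftrightarrow>
     (\<forall>T\<subseteq>S. card T = 3 \<longrightarrow> \<not> collinear T) \<and>
     (\<forall>T\<subseteq>S. card T = 4 \<longrightarrow> \<not> cocircular T)"

definition circumcenter :: "complex set \<Rightarrow> complex" where
  "circumcenter T = (THE z. \<forall>p\<in>T. \<forall>q\<in>T. dist p z = dist q z)"

definition circumradius :: "complex set \<Rightarrow> real" where
  "circumradius T = (SOME r. \<forall>p\<in>T. dist p (circumcenter T) = r)"

definition circle_order :: "complex set \<Rightarrow> complex set \<Rightarrow> nat" where
  "circle_order S T = card {p\<in>S. dist p (circumcenter T) < circumradius T}"

definition circle_count :: "complex set \<Rightarrow> nat \<Rightarrow> nat" where
  "circle_count S i = card {T. T \<subseteq> S \<and> card T = 3 \<and> circle_order S T = i}"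

end

(*
  Call a triple T of a finite point set W enclosing if all other points of W lie inside the
  circumcircle of T, and call a pair (a, b) a hull edge of W if all other points lie strictly to
  the left of the directed line ab. For W in general position with at least three points, the
  number of enclosing triples is the number of hull edges minus 2: deleting a point that lies
  inside a triangle of other points changes neither number, and for points in convex position
  the enclosing triples (the farthest-point Delaunay triangulation) can be split along a chord
  into two smaller such triangulations.

  Summing this over all (k + 3)-subsets W of S turns it into a relation between binomial
  moments: a triple whose circle has order i is enclosing in C(i, k) of the subsets, and a
  pair with l points to its left is a hull edge of C(l, k + 1) of them. Since this holds for
  every k, the binomial transform can be inverted, giving c_i + 2 C(n - 1 - i, 2) = e_i,
  where e_i counts directed pairs with more than i points to their left. Reversing a pair
  turns l left points into n - 2 - l, so e_i + e_(n-3-i) = n (n - 1), and the identity follows.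
*)
theory Submission
  imports Defs
begin

section \<open>Orientation and affine functions\<close>

text \<open>Twice the signed area of the triangle \<open>abc\<close>: positive iff \<open>c\<close> lies to the left of the
  directed line \<open>ab\<close>.\<close>
definition orient :: "complex \<Rightarrow> complex \<Rightarrow> complex \<Rightarrow> real" where
  "orient a b c = (Re b - Re a) * (Im c - Im a) - (Im b - Im a) * (Re c - Re a)"

lemma orient_rotate: "orient a b c = orient b c a"
  by (simp add: orient_def algebra_simps)

lemma orient_swap: "orient b a c = - orient a b c"
  by (simp add: orient_def algebra_simps)

lemma orient_degenerate [simp]: "orient a a c = 0" "orient a b a = 0" "orient a b b = 0"
  by (simp_all add: orient_def algebra_simps)

lemma collinear_iff_orient: "collinear {a, b, c} \<longleftrightarrow> orient a b c = 0"
proof -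
  have "collinear {a, b, c} \<longleftrightarrow> (c - b) / (a - b) \<in> \<real>"
    by (simp add: collinear_3 collinear_iff_Reals)
  also have "\<dots> \<longleftrightarrow> orient a b c = 0"
    unfolding complex_is_Real_iff Im_complex_div_eq_0 orient_def by (auto simp: algebra_simps)
  finally show ?thesis .
qed

definition affine_fun :: "(complex \<Rightarrow> real) \<Rightarrow> bool" where
  "affine_fun f \<longleftrightarrow> (\<exists>A B C. \<forall>p. f p = A * Re p + B * Im p + C)"

lemma affine_fun_orient: "affine_fun (orient a b)"
  unfolding affine_fun_def orient_def
  by (rule exI[of _ "Im a - Im b"], rule exI[of _ "Re b - Re a"], rule exI[of _ "Re a * Im b - Im a * Re b"])
     (simp add: algebra_simps)

lemma affine_fun_Re: "affine_fun Re"
  unfolding affine_fun_def by (rule exI[of _ 1], rule exI[of _ 0], rule exI[of _ 0]) simp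

lemma affine_fun_Im: "affine_fun Im"
  unfolding affine_fun_def by (rule exI[of _ 0], rule exI[of _ 1], rule exI[of _ 0]) simp

lemma affine_fun_diff:
  assumes "affine_fun f" "affine_fun g"
  shows "affine_fun (\<lambda>p. f p - g p)"
proof -
  obtain A B C A' B' C' where f: "\<And>p. f p = A * Re p + B * Im p + C"
    and g: "\<And>p. g p = A' * Re p + B' * Im p + C'"
    using assms unfolding affine_fun_def by metis
  show ?thesis
    unfolding affine_fun_def
    by (rule exI[of _ "A - A'"], rule exI[of _ "B - B'"], rule exI[of _ "C - C'"])
       (simp add: f g algebra_simps)
qed

text \<open>Cramer's rule: \<open>orient y z p\<close>, \<open>orient z x p\<close>, \<open>orient x y p\<close> are the barycentric
  coordinates of \<open>p\<close> with respect to \<open>x\<close>, \<open>y\<close>, \<open>z\<close>, scaled by \<open>orient x y z\<close>.\<close>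
lemma affine_fun_cramer:
  assumes "affine_fun f"
  shows "f p * orient x y z = orient y z p * f x + orient z x p * f y + orient x y p * f z"
  using assms unfolding affine_fun_def orient_def by (auto simp: algebra_simps)

definition in_triangle :: "complex \<Rightarrow> complex \<Rightarrow> complex \<Rightarrow> complex \<Rightarrow> bool" where
  "in_triangle p x y z \<longleftrightarrow>
     (orient x y p > 0 \<and> orient y z p > 0 \<and> orient z x p > 0) \<or>
     (orient x y p < 0 \<and> orient y z p < 0 \<and> orient z x p < 0)"

lemma in_triangle_distinct:
  "in_triangle p x y z \<Longrightarrow> x \<noteq> y \<and> y \<noteq> z \<and> x \<noteq> z \<and> p \<noteq> x \<and> p \<noteq> y \<and> p \<noteq> z"
  unfolding in_triangle_def by (auto simp: orient_def)

lemma orient_sum: "orient x y z = orient y z p + orient z x p + orient x y p"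
  by (simp add: orient_def algebra_simps)

lemma affine_fun_pos_in_triangle:
  assumes f: "affine_fun f" and p: "in_triangle p x y z"
    and "f x \<ge> 0" "f y \<ge> 0" "f z \<ge> 0" "f x > 0 \<or> f y > 0 \<or> f z > 0"
  shows "f p > 0"
proof -
  have cramer: "f p * orient x y z = orient y z p * f x + orient z x p * f y + orient x y p * f z"
    by (rule affine_fun_cramer[OF f])
  have D: "orient x y z = orient y z p + orient z x p + orient x y p"
    by (rule orient_sum)
  show ?thesis
    using p unfolding in_triangle_def
  proof (elim disjE conjE)
    assume o: "orient x y p > 0" "orient y z p > 0" "orient z x p > 0"
    then have "orient y z p * f x \<ge> 0" "orient z x p * f y \<ge> 0" "orient x y p * f z \<ge> 0"
      and "orient y z p * f x > 0 \<or> orient z x p * f y > 0 \<or> orient x y p * f z > 0"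
      using assms(3-6) by auto
    then have "f p * orient x y z > 0" "orient x y z > 0"
      using o cramer D by linarith+
    then show ?thesis by (simp add: zero_less_mult_iff)
  next
    assume o: "orient x y p < 0" "orient y z p < 0" "orient z x p < 0"
    then have "orient y z p * f x \<le> 0" "orient z x p * f y \<le> 0" "orient x y p * f z \<le> 0"
      and "orient y z p * f x < 0 \<or> orient z x p * f y < 0 \<or> orient x y p * f z < 0"
      using assms(3-6) by (auto simp: mult_nonpos_nonneg mult_neg_pos)
    then have "f p * orient x y z < 0" "orient x y z < 0"
      using o cramer D by linarith+
    then show ?thesis by (simp add: mult_less_0_iff)
  qed
qed

lemma in_triangle_convex_comb:
  assumes "in_triangle p x y z"
  obtains \<alpha> \<beta> \<gamma> :: real where "\<alpha> > 0" "\<beta> > 0" "\<gamma> > 0" "\<alpha> + \<beta> + \<gamma> = 1"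
    "p = \<alpha> *\<^sub>R x + \<beta> *\<^sub>R y + \<gamma> *\<^sub>R z"
proof -
  define D where "D = orient x y z"
  have D: "D = orient y z p + orient z x p + orient x y p"
    unfolding D_def by (rule orient_sum)
  have pos: "orient y z p / D > 0" "orient z x p / D > 0" "orient x y p / D > 0"
    using assms unfolding in_triangle_def D by (auto intro: divide_pos_pos divide_neg_neg)
  then have "D \<noteq> 0" by auto
  have "Re p * D = orient y z p * Re x + orient z x p * Re y + orient x y p * Re z"
       "Im p * D = orient y z p * Im x + orient z x p * Im y + orient x y p * Im z"
    unfolding D_def by (simp_all only: affine_fun_cramer[OF affine_fun_Re] affine_fun_cramer[OF affine_fun_Im])
  with \<open>D \<noteq> 0\<close> have "p = (orient y z p / D) *\<^sub>R x + (orient z x p / D) *\<^sub>R y + (orient x y p / D) *\<^sub>R z"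
    by (simp add: complex_eq_iff field_simps)
  moreover have "orient y z p / D + orient z x p / D + orient x y p / D = 1"
    using \<open>D \<noteq> 0\<close> D by (simp add: add_divide_distrib [symmetric])
  ultimately show ?thesis using pos that by blast
qed

section \<open>Circumcircles\<close>

text \<open>The circles through \<open>a\<close> and \<open>b\<close> form a pencil: \<open>pencil_center a b t\<close> runs through their
  centres, and \<open>pencil_param a b p\<close> is the parameter \<open>t\<close> of the circle through \<open>p\<close>.\<close>
definition pencil_center :: "complex \<Rightarrow> complex \<Rightarrow> real \<Rightarrow> complex" where
  "pencil_center a b t = (a + b) / 2 + complex_of_real (t / 2) * \<i> * (b - a)"

definition pencil_param :: "complex \<Rightarrow> complex \<Rightarrow> complex \<Rightarrow> real" where
  "pencil_param a b p = ((p - a) \<bullet> (p - b)) / orient a b p"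

lemma power_pencil_center:
  "(dist a (pencil_center a b t))\<^sup>2 - (dist p (pencil_center a b t))\<^sup>2
     = t * orient a b p - (p - a) \<bullet> (p - b)"
  unfolding dist_norm cmod_power2 inner_complex_def
  by (simp add: pencil_center_def orient_def power2_eq_square algebra_simps)

lemma equidistant_point_unique:
  assumes "orient a b q \<noteq> 0"
    and "dist a z = dist b z" "dist a z = dist q z"
    and "dist a w = dist b w" "dist a w = dist q w"
  shows "z = w"
proof -
  define u where "u = z - w"
  have "(dist a z)\<^sup>2 - (dist a w)\<^sup>2 = (dist b z)\<^sup>2 - (dist b w)\<^sup>2"
       "(dist a z)\<^sup>2 - (dist a w)\<^sup>2 = (dist q z)\<^sup>2 - (dist q w)\<^sup>2"
    using assms(2-5) by simp_all
  then have perp: "Re u * (Re b - Re a) + Im u * (Im b - Im a) = 0"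
                  "Re u * (Re q - Re a) + Im u * (Im q - Im a) = 0"
    unfolding u_def dist_norm cmod_power2 by (simp_all add: power2_eq_square algebra_simps)
  have "Re u * orient a b q = (Im q - Im a) * (Re u * (Re b - Re a) + Im u * (Im b - Im a))
          - (Im b - Im a) * (Re u * (Re q - Re a) + Im u * (Im q - Im a))"
       "Im u * orient a b q = (Re b - Re a) * (Re u * (Re q - Re a) + Im u * (Im q - Im a))
          - (Re q - Re a) * (Re u * (Re b - Re a) + Im u * (Im b - Im a))"
    unfolding orient_def by (simp_all add: algebra_simps)
  then have "Re u * orient a b q = 0" "Im u * orient a b q = 0"
    using perp by simp_all
  then have "Re u = 0" "Im u = 0"
    using assms(1) by simp_all
  then show ?thesis
    unfolding u_def by (simp add: complex_eq_iff)
qed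

lemma circumcircle_triangle:
  assumes "orient a b q \<noteq> 0"
  defines "z \<equiv> pencil_center a b (pencil_param a b q)"
  shows "circumcenter {a, b, q} = z" and "circumradius {a, b, q} = dist a z"
proof -
  have sq: "(dist p z)\<^sup>2 = (dist a z)\<^sup>2" if "p = b \<or> p = q" for p
    using that assms(1) power_pencil_center[of a b "pencil_param a b q" p]
    unfolding z_def pencil_param_def by auto
  have eq: "dist b z = dist a z" "dist q z = dist a z"
    using sq[of b] sq[of q] by (simp_all add: power2_eq_iff_nonneg)
  show center: "circumcenter {a, b, q} = z"
    unfolding circumcenter_def
  proof (rule the_equality)
    fix w
    assume "\<forall>p\<in>{a, b, q}. \<forall>r\<in>{a, b, q}. dist p w = dist r w"
    then show "w = z"
      using equidistant_point_unique[OF assms(1) _ _ eq[symmetric]] by blast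
  qed (use eq in auto)
  have "\<forall>p\<in>{a, b, q}. dist p z = dist a z"
    using eq by simp
  then have "\<forall>p\<in>{a, b, q}. dist p z = circumradius {a, b, q}"
    unfolding circumradius_def center by (rule someI)
  then show "circumradius {a, b, q} = dist a z" by simp
qed

text \<open>The power of \<open>p\<close> with respect to the circumcircle of \<open>T\<close>, negated so that it is
  positive exactly inside.\<close>
definition circle_power :: "complex set \<Rightarrow> complex \<Rightarrow> real" where
  "circle_power T p = (circumradius T)\<^sup>2 - (dist p (circumcenter T))\<^sup>2"

definition in_circumcircle :: "complex set \<Rightarrow> complex \<Rightarrow> bool" where
  "in_circumcircle T p \<longleftrightarrow> dist p (circumcenter T) < circumradius T"

lemma circle_power_triangle:
  assumes "orient a b q \<noteq> 0"
  shows "circle_power {a, b, q} p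
    = pencil_param a b q * orient a b p - (p - a) \<bullet> (p - b)"
  unfolding circle_power_def circumcircle_triangle[OF assms] by (rule power_pencil_center)

lemma circle_power_triangle_vertex:
  assumes "orient a b q \<noteq> 0" "u \<in> {a, b, q}"
  shows "circle_power {a, b, q} u = 0"
  using assms unfolding circle_power_triangle[OF assms(1)] pencil_param_def
  by (auto simp: orient_def)

lemma circle_power_pencil_param:
  assumes "orient a b q \<noteq> 0" "orient a b p \<noteq> 0"
  shows "circle_power {a, b, q} p = (pencil_param a b q - pencil_param a b p) * orient a b p"
  using assms(2) unfolding circle_power_triangle[OF assms(1)] pencil_param_def
  by (simp add: left_diff_distrib)

lemma in_circumcircle_triangle_iff:
  assumes "orient a b q \<noteq> 0"
  shows "in_circumcircle {a, b, q} p \<longleftrightarrow> circle_power {a, b, q} p > 0"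
proof -
  have "circumradius {a, b, q} \<ge> 0"
    by (simp add: circumcircle_triangle[OF assms])
  then show ?thesis
    unfolding in_circumcircle_def circle_power_def
    by (smt (verit) power_mono power_strict_mono zero_le_dist zero_less_numeral)
qed

lemma affine_fun_circle_power_add_norm: "affine_fun (\<lambda>p. circle_power T p + (cmod p)\<^sup>2)"
  unfolding affine_fun_def circle_power_def dist_norm cmod_power2
  by (rule exI[of _ "2 * Re (circumcenter T)"], rule exI[of _ "2 * Im (circumcenter T)"],
      rule exI[of _ "(circumradius T)\<^sup>2 - (Re (circumcenter T))\<^sup>2 - (Im (circumcenter T))\<^sup>2"])
     (simp add: cmod_power2 power2_eq_square algebra_simps)

lemma affine_fun_circle_power_diff: "affine_fun (\<lambda>p. circle_power T p - circle_power T' p)"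
  using affine_fun_diff[OF affine_fun_circle_power_add_norm affine_fun_circle_power_add_norm, of T T']
  by simp

lemma affine_fun_convex_comb:
  assumes "affine_fun f" "\<alpha> + \<beta> + \<gamma> = 1"
  shows "f (\<alpha> *\<^sub>R x + \<beta> *\<^sub>R y + \<gamma> *\<^sub>R z) = \<alpha> * f x + \<beta> * f y + \<gamma> * f z"
proof -
  obtain A B C where "\<And>p. f p = A * Re p + B * Im p + C"
    using assms(1) unfolding affine_fun_def by blast
  moreover have "C = \<alpha> * C + \<beta> * C + \<gamma> * C"
    using assms(2) by (metis distrib_right mult_1)
  ultimately show ?thesis by (simp add: algebra_simps)
qed

lemma norm_convex_comb_square:
  fixes x y z :: complex
  assumes "\<alpha> + \<beta> + \<gamma> = 1"
  shows "(cmod (\<alpha> *\<^sub>R x + \<beta> *\<^sub>R y + \<gamma> *\<^sub>R z))\<^sup>2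
    = \<alpha> * (cmod x)\<^sup>2 + \<beta> * (cmod y)\<^sup>2 + \<gamma> * (cmod z)\<^sup>2
      - \<alpha> * \<beta> * (cmod (x - y))\<^sup>2 - \<beta> * \<gamma> * (cmod (y - z))\<^sup>2 - \<gamma> * \<alpha> * (cmod (z - x))\<^sup>2"
proof -
  have \<gamma>: "\<gamma> = 1 - \<alpha> - \<beta>" using assms by simp
  show ?thesis
    unfolding \<gamma> cmod_power2 by (simp add: power2_eq_square algebra_simps)
qed

lemma circle_power_pos_in_triangle:
  assumes "in_triangle p x y z"
    and "circle_power T x \<ge> 0" "circle_power T y \<ge> 0" "circle_power T z \<ge> 0"
  shows "circle_power T p > 0"
proof -
  obtain \<alpha> \<beta> \<gamma> where w: "\<alpha> > 0" "\<beta> > 0" "\<gamma> > 0" "\<alpha> + \<beta> + \<gamma> = 1"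
    and p: "p = \<alpha> *\<^sub>R x + \<beta> *\<^sub>R y + \<gamma> *\<^sub>R z"
    using in_triangle_convex_comb[OF assms(1)] .
  have "circle_power T p = \<alpha> * circle_power T x + \<beta> * circle_power T y + \<gamma> * circle_power T z
      + \<alpha> * \<beta> * (cmod (x - y))\<^sup>2 + \<beta> * \<gamma> * (cmod (y - z))\<^sup>2 + \<gamma> * \<alpha> * (cmod (z - x))\<^sup>2"
    using affine_fun_convex_comb[OF affine_fun_circle_power_add_norm w(4), of T x y z]
      norm_convex_comb_square[OF w(4), of x y z]
    unfolding p by (simp add: algebra_simps)
  moreover have "\<alpha> * \<beta> * (cmod (x - y))\<^sup>2 > 0"
    using w in_triangle_distinct[OF assms(1)] by simp
  ultimately show ?thesis
    using w assms(2-4) by (smt (verit) mult_nonneg_nonneg zero_le_power2)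
qed

lemma general_position_subset: "general_position S \<Longrightarrow> V \<subseteq> S \<Longrightarrow> general_position V"
  unfolding general_position_def by (meson subset_trans)

lemma general_position_not_cocircular:
  "general_position S \<Longrightarrow> Q \<subseteq> S \<Longrightarrow> card Q = 4 \<Longrightarrow> \<not> cocircular Q"
  unfolding general_position_def by blast

lemma general_position_orient:
  assumes "general_position S" "a \<in> S" "b \<in> S" "c \<in> S" "a \<noteq> b" "b \<noteq> c" "a \<noteq> c"
  shows "orient a b c \<noteq> 0"
proof -
  have "{a, b, c} \<subseteq> S" "card {a, b, c} = 3"
    using assms(2-7) by auto
  then have "\<not> collinear {a, b, c}"
    using assms(1) unfolding general_position_def by blast
  then show ?thesis
    by (simp add: collinear_iff_orient)
qed

lemma general_position_triangle:
  assumes "general_position S" "T \<subseteq> S" "card T = 3"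
  obtains a b q where "T = {a, b, q}" "orient a b q \<noteq> 0"
proof -
  obtain a b q where T: "T = {a, b, q}" "a \<noteq> b" "b \<noteq> q" "a \<noteq> q"
    using assms(3) unfolding card_3_iff by blast
  moreover have "a \<in> S" "b \<in> S" "q \<in> S"
    using T(1) assms(2) by auto
  ultimately have "orient a b q \<noteq> 0"
    using general_position_orient[OF assms(1)] by blast
  with T show ?thesis
    using that by blast
qed

lemma circle_power_vertex:
  assumes "general_position S" "T \<subseteq> S" "card T = 3" "u \<in> T"
  shows "circle_power T u = 0"
proof -
  obtain a b q where "T = {a, b, q}" "orient a b q \<noteq> 0"
    using general_position_triangle[OF assms(1-3)] .
  then show ?thesis
    using circle_power_triangle_vertex assms(4) by blast
qed

lemma in_circumcircle_iff:
  assumes "general_position S" "T \<subseteq> S" "card T = 3"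
  shows "in_circumcircle T p \<longleftrightarrow> circle_power T p > 0"
proof -
  obtain a b q where "T = {a, b, q}" "orient a b q \<noteq> 0"
    using general_position_triangle[OF assms] .
  then show ?thesis
    using in_circumcircle_triangle_iff by blast
qed

lemma circle_power_nonzero:
  assumes gp: "general_position S" and T: "T \<subseteq> S" "card T = 3" and p: "p \<in> S - T"
  shows "circle_power T p \<noteq> 0"
proof
  assume p0: "circle_power T p = 0"
  obtain a b q where "T = {a, b, q}" "orient a b q \<noteq> 0"
    using general_position_triangle[OF gp T] .
  then have R: "circumradius T \<ge> 0"
    by (simp add: circumcircle_triangle)
  have "(dist u (circumcenter T))\<^sup>2 = (circumradius T)\<^sup>2" if "u \<in> insert p T" for u
    using that p0 circle_power_vertex[OF gp T] unfolding circle_power_def by auto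
  then have "dist u (circumcenter T) = circumradius T" if "u \<in> insert p T" for u
    using that power2_eq_iff_nonneg[OF zero_le_dist R] by blast
  then have "cocircular (insert p T)"
    unfolding cocircular_def by blast
  moreover have "card (insert p T) = 4"
    using T(2) p by (simp add: card_ge_0_finite)
  moreover have "insert p T \<subseteq> S"
    using T(1) p by blast
  ultimately show False
    using general_position_not_cocircular[OF gp] by blast
qed

lemma circle_power_nonneg_iff:
  assumes "general_position S" "T \<subseteq> S" "card T = 3" "p \<in> S"
  shows "circle_power T p \<ge> 0 \<longleftrightarrow> p \<in> T \<or> in_circumcircle T p"
proof (cases "p \<in> T")
  case True
  then show ?thesis
    using circle_power_vertex[OF assms(1-3)] by simp
next
  case False
  then have "circle_power T p \<noteq> 0"
    using circle_power_nonzero[OF assms(1-3)] assms(4) by blast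
  then show ?thesis
    unfolding in_circumcircle_iff[OF assms(1-3)] using False by linarith
qed

section \<open>Enclosing triangles and hull edges\<close>

definition enclosing_triangles :: "complex set \<Rightarrow> complex set set" where
  "enclosing_triangles W = {T. T \<subseteq> W \<and> card T = 3 \<and> (\<forall>p\<in>W - T. in_circumcircle T p)}"

definition hull_edges :: "complex set \<Rightarrow> (complex \<times> complex) set" where
  "hull_edges W = {(a, b). a \<in> W \<and> b \<in> W \<and> a \<noteq> b \<and> (\<forall>p\<in>W - {a, b}. orient a b p > 0)}"

definition convex_position :: "complex set \<Rightarrow> bool" where
  "convex_position W \<longleftrightarrow> (\<forall>p\<in>W. \<forall>x\<in>W. \<forall>y\<in>W. \<forall>z\<in>W. \<not> in_triangle p x y z)"

lemma finite_enclosing_triangles: "finite W \<Longrightarrow> finite (enclosing_triangles W)"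
  by (rule finite_subset[of _ "Pow W"]) (auto simp: enclosing_triangles_def)

lemma enclosing_triangles_subset:
  "T \<in> enclosing_triangles W \<Longrightarrow> T \<subseteq> V \<Longrightarrow> V \<subseteq> W \<Longrightarrow> T \<in> enclosing_triangles V"
  unfolding enclosing_triangles_def by blast

lemma circle_power_enclosing_nonneg:
  assumes "general_position W" "T \<in> enclosing_triangles W" "u \<in> W"
  shows "circle_power T u \<ge> 0"
proof -
  have T: "T \<subseteq> W" "card T = 3" and "\<forall>p\<in>W - T. in_circumcircle T p"
    using assms(2) unfolding enclosing_triangles_def by auto
  then show ?thesis
    unfolding circle_power_nonneg_iff[OF assms(1) T assms(3)] using assms(3) by blast
qed

lemma orient_pos_in_triangle:
  assumes "in_triangle p x y z" "\<forall>u\<in>{x, y, z} - {a, b}. orient a b u > 0"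
  shows "orient a b p > 0"
proof (rule affine_fun_pos_in_triangle[OF affine_fun_orient assms(1)])
  have "orient a b u \<ge> 0" if "u \<in> {x, y, z}" for u
    using assms(2) that by (cases "u \<in> {a, b}") (auto intro: less_imp_le)
  then show "orient a b x \<ge> 0" "orient a b y \<ge> 0" "orient a b z \<ge> 0"
    by auto
  have "{x, y, z} - {a, b} \<noteq> {}"
    using in_triangle_distinct[OF assms(1)] by auto
  then show "orient a b x > 0 \<or> orient a b y > 0 \<or> orient a b z > 0"
    using assms(2) by blast
qed

lemma enclosing_triangles_remove_interior:
  assumes gp: "general_position W" and "p \<in> W" "x \<in> W" "y \<in> W" "z \<in> W"
    and p: "in_triangle p x y z"
  shows "enclosing_triangles (W - {p}) = enclosing_triangles W"
proof
  have xyz: "x \<in> W - {p}" "y \<in> W - {p}" "z \<in> W - {p}"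
    using assms(3-5) in_triangle_distinct[OF p] by auto
  show "enclosing_triangles (W - {p}) \<subseteq> enclosing_triangles W"
  proof
    fix T
    assume T: "T \<in> enclosing_triangles (W - {p})"
    have gp': "general_position (W - {p})"
      using general_position_subset[OF gp] by blast
    have "circle_power T p > 0"
      using circle_power_pos_in_triangle[OF p] circle_power_enclosing_nonneg[OF gp' T] xyz by blast
    then show "T \<in> enclosing_triangles W"
      using T in_circumcircle_iff[OF gp', of T] unfolding enclosing_triangles_def by auto
  qed
  show "enclosing_triangles W \<subseteq> enclosing_triangles (W - {p})"
  proof
    fix T
    assume T: "T \<in> enclosing_triangles W"
    then have "T \<subseteq> W" "card T = 3"
      unfolding enclosing_triangles_def by auto
    moreover have "circle_power T p > 0"
      using circle_power_pos_in_triangle[OF p] circle_power_enclosing_nonneg[OF gp T] xyz by blast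
    ultimately have "p \<notin> T"
      using circle_power_vertex[OF gp] by force
    then show "T \<in> enclosing_triangles (W - {p})"
      using T unfolding enclosing_triangles_def by blast
  qed
qed

lemma hull_edges_remove_interior:
  assumes "x \<in> W" "y \<in> W" "z \<in> W" and p: "in_triangle p x y z"
  shows "hull_edges (W - {p}) = hull_edges W"
proof -
  have p_left: "orient a b p > 0" if "\<forall>q\<in>W - {p} - {a, b}. orient a b q > 0" for a b
  proof (rule orient_pos_in_triangle[OF p])
    show "\<forall>u\<in>{x, y, z} - {a, b}. orient a b u > 0"
      using that assms(1-3) in_triangle_distinct[OF p] by blast
  qed
  have "(a, b) \<in> hull_edges (W - {p}) \<longleftrightarrow> (a, b) \<in> hull_edges W" for a b
  proof
    assume "(a, b) \<in> hull_edges (W - {p})"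
    then have "a \<in> W" "b \<in> W" "a \<noteq> b" "\<forall>q\<in>W - {p} - {a, b}. orient a b q > 0"
      unfolding hull_edges_def by auto
    moreover from this(4) have "orient a b p > 0"
      by (rule p_left)
    ultimately show "(a, b) \<in> hull_edges W"
      unfolding hull_edges_def by auto
  next
    assume "(a, b) \<in> hull_edges W"
    then have "a \<in> W" "b \<in> W" "a \<noteq> b" and left: "\<forall>q\<in>W - {a, b}. orient a b q > 0"
      unfolding hull_edges_def by auto
    moreover have "orient a b p > 0"
      using left by (intro p_left) blast
    ultimately show "(a, b) \<in> hull_edges (W - {p})"
      unfolding hull_edges_def by auto
  qed
  then show ?thesis
    by (intro set_eqI) (metis surj_pair)
qed

lemma convex_position_subset: "convex_position W \<Longrightarrow> V \<subseteq> W \<Longrightarrow> convex_position V"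
  unfolding convex_position_def by blast

text \<open>In convex position, points on opposite sides of the line \<open>ab\<close> span a segment crossing
  the segment \<open>ab\<close>.\<close>
lemma convex_position_crossing:
  assumes gp: "general_position W" and cv: "convex_position W"
    and W: "a \<in> W" "b \<in> W" "x \<in> W" "y \<in> W"
    and x: "orient a b x > 0" and y: "orient a b y < 0"
  shows "orient x y b > 0" "orient x y a < 0"
proof -
  have "x \<noteq> y" "a \<noteq> b" "x \<noteq> a" "x \<noteq> b" "y \<noteq> a" "y \<noteq> b"
    using x y by auto
  then have "orient x y a \<noteq> 0" "orient x y b \<noteq> 0"
    using general_position_orient[OF gp] W by auto
  moreover have "\<not> orient x y a > 0"
  proof
    assume "orient x y a > 0"
    then have "in_triangle a b x y"
      using x y unfolding in_triangle_def by (simp add: orient_def algebra_simps)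
    then show False
      using cv W unfolding convex_position_def by blast
  qed
  moreover have "\<not> orient x y b < 0"
  proof
    assume "orient x y b < 0"
    then have "in_triangle b a y x"
      using x y unfolding in_triangle_def by (simp add: orient_def algebra_simps)
    then show False
      using cv W unfolding convex_position_def by blast
  qed
  moreover have "orient a b x - orient a b y = orient x y b - orient x y a"
    by (simp add: orient_def algebra_simps)
  ultimately show "orient x y b > 0" "orient x y a < 0"
    using x y by linarith+
qed

text \<open>The four orientation hypotheses say that the segments \<open>ab\<close> and \<open>xy\<close> cross.\<close>
lemma affine_fun_crossing:
  assumes h: "affine_fun h"
    and "orient a b x > 0" "orient a b y < 0" "orient x y b > 0" "orient x y a < 0"
    and "h a \<ge> 0" "h b \<ge> 0" "h x \<le> 0"
  shows "h y \<ge> 0"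
proof -
  have "orient b x y = orient x y b" "orient x a y = - orient x y a"
    by (simp_all add: orient_def algebra_simps)
  then have "h y * orient a b x = orient x y b * h a + - orient x y a * h b + orient a b y * h x"
    using affine_fun_cramer[OF h, of y a b x] by simp
  moreover have "orient x y b * h a \<ge> 0" "- orient x y a * h b \<ge> 0" "orient a b y * h x \<ge> 0"
    using assms(3-8) by (simp_all add: mult_nonpos_nonpos mult_nonpos_nonneg)
  ultimately have "h y * orient a b x \<ge> 0"
    by linarith
  then show ?thesis
    using assms(2) by (simp add: zero_le_mult_iff)
qed

text \<open>Any point right of \<open>ac\<close> but left of \<open>ab\<close> would put \<open>a\<close> inside a triangle.\<close>
lemma convex_position_fewer_right_points:
  assumes gp: "general_position W" and cv: "convex_position W" and fin: "finite W"
    and W: "a \<in> W" "b \<in> W" "c \<in> W" "a \<noteq> b" and c_right: "orient a b c < 0"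
  shows "card {d \<in> W. orient a c d < 0} < card {d \<in> W. orient a b d < 0}"
proof -
  have "{d \<in> W. orient a c d < 0} \<subseteq> {d \<in> W. orient a b d < 0} - {c}"
  proof
    fix d
    assume "d \<in> {d \<in> W. orient a c d < 0}"
    then have d: "d \<in> W" "orient a c d < 0"
      by auto
    have "orient a c b > 0"
      using c_right by (simp add: orient_def algebra_simps)
    then have "d \<noteq> a" "d \<noteq> b" "d \<noteq> c"
      using d by auto
    then have "orient a b d \<noteq> 0"
      using general_position_orient[OF gp W(1,2) d(1)] W(4) by auto
    moreover have "\<not> in_triangle a b c d"
      using cv W d(1) unfolding convex_position_def by blast
    then have "\<not> orient a b d > 0"
      using c_right d(2) unfolding in_triangle_def by (auto simp: orient_def algebra_simps)
    ultimately show "d \<in> {d \<in> W. orient a b d < 0} - {c}"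
      using d(1) \<open>d \<noteq> c\<close> by auto
  qed
  then show ?thesis
    using fin W(3) c_right by (intro psubset_card_mono) auto
qed

text \<open>Take \<open>b\<close> with the fewest points to the right of \<open>ab\<close>.\<close>
lemma hull_edge_from:
  assumes gp: "general_position W" and cv: "convex_position W" and fin: "finite W"
    and a: "a \<in> W" and b': "b' \<in> W" "b' \<noteq> a"
  obtains b where "(a, b) \<in> hull_edges W"
proof -
  define right where "right b = card {d \<in> W. orient a b d < 0}" for b
  obtain b where b: "b \<in> W" "b \<noteq> a"
    and min: "\<And>c. c \<in> W \<Longrightarrow> c \<noteq> a \<Longrightarrow> right b \<le> right c"
    using ex_has_least_nat[of "\<lambda>b. b \<in> W \<and> b \<noteq> a" b' right] b' by blast
  have "orient a b c > 0" if c: "c \<in> W - {a, b}" for c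
  proof (rule ccontr)
    assume "\<not> orient a b c > 0"
    moreover have "orient a b c \<noteq> 0"
      using general_position_orient[OF gp a b(1)] b(2) c by auto
    ultimately have "orient a b c < 0"
      by linarith
    then have "right c < right b"
      unfolding right_def using convex_position_fewer_right_points[OF gp cv fin a b(1)] b(2) c by auto
    then show False
      using min[of c] c by auto
  qed
  then have "(a, b) \<in> hull_edges W"
    unfolding hull_edges_def using a b by auto
  then show ?thesis ..
qed

lemma hull_edges_unique:
  assumes "(a, b) \<in> hull_edges W" "(a, c) \<in> hull_edges W"
  shows "b = c"
proof (rule ccontr)
  assume "b \<noteq> c"
  then have "orient a b c > 0" "orient a c b > 0"
    using assms unfolding hull_edges_def by auto
  moreover have "orient a c b = - orient a b c"
    by (simp add: orient_def algebra_simps)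
  ultimately show False
    by simp
qed

lemma card_hull_edges_convex:
  assumes gp: "general_position W" and cv: "convex_position W" and fin: "finite W"
    and "card W \<ge> 2"
  shows "card (hull_edges W) = card W"
proof -
  have "fst ` hull_edges W = W"
  proof
    show "fst ` hull_edges W \<subseteq> W"
      unfolding hull_edges_def by auto
    show "W \<subseteq> fst ` hull_edges W"
    proof
      fix a
      assume a: "a \<in> W"
      have "card (W - {a}) > 0"
        using assms(4) a fin by simp
      then obtain b' where "b' \<in> W" "b' \<noteq> a"
        by (auto simp: card_gt_0_iff)
      then obtain b where "(a, b) \<in> hull_edges W"
        using hull_edge_from[OF gp cv fin a] by blast
      then show "a \<in> fst ` hull_edges W"
        by force
    qed
  qed
  moreover have "inj_on fst (hull_edges W)"
  proof (rule inj_onI)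
    fix e e'
    assume "e \<in> hull_edges W" "e' \<in> hull_edges W" "fst e = fst e'"
    then show "e = e'"
      by (cases e, cases e') (auto dest: hull_edges_unique)
  qed
  ultimately show ?thesis
    using card_image by fastforce
qed

text \<open>All other points lie left of \<open>ab\<close>, so the circle through \<open>a\<close>, \<open>b\<close> and the point of
  largest pencil parameter contains them all.\<close>
lemma hull_edge_enclosing_triangle:
  assumes gp: "general_position W" and fin: "finite W"
    and ab: "(a, b) \<in> hull_edges W" and nonempty: "W - {a, b} \<noteq> {}"
  obtains q where "q \<in> W - {a, b}" "{a, b, q} \<in> enclosing_triangles W"
proof -
  have left: "orient a b p > 0" if "p \<in> W - {a, b}" for p
    using ab that unfolding hull_edges_def by auto
  have "Max (pencil_param a b ` (W - {a, b})) \<in> pencil_param a b ` (W - {a, b})"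
    using fin nonempty by (intro Max_in) auto
  then obtain q where q: "q \<in> W - {a, b}"
    and "pencil_param a b q = Max (pencil_param a b ` (W - {a, b}))"
    by force
  then have max: "pencil_param a b p \<le> pencil_param a b q" if "p \<in> W - {a, b}" for p
    using that fin by simp
  have T: "{a, b, q} \<subseteq> W" "card {a, b, q} = 3"
    using ab q unfolding hull_edges_def by auto
  have "in_circumcircle {a, b, q} p" if p: "p \<in> W - {a, b, q}" for p
  proof -
    have "orient a b q \<noteq> 0" "orient a b p \<noteq> 0"
      using left q p by (auto simp: less_imp_neq[symmetric])
    then have "circle_power {a, b, q} p = (pencil_param a b q - pencil_param a b p) * orient a b p"
      by (rule circle_power_pencil_param)
    then have "circle_power {a, b, q} p \<ge> 0"
      using max[of p] left[of p] p by simp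
    moreover have "circle_power {a, b, q} p \<noteq> 0"
      using circle_power_nonzero[OF gp T] p by blast
    ultimately show ?thesis
      unfolding in_circumcircle_iff[OF gp T] by linarith
  qed
  then have "{a, b, q} \<in> enclosing_triangles W"
    using T unfolding enclosing_triangles_def by blast
  with q that show ?thesis
    by blast
qed

fun left_points :: "complex set \<Rightarrow> complex \<times> complex \<Rightarrow> complex set" where
  "left_points S (a, b) = {p \<in> S. orient a b p > 0}"

lemma left_points_Un:
  assumes "general_position S" "a \<in> S" "b \<in> S" "a \<noteq> b"
  shows "left_points S (a, b) \<union> left_points S (b, a) = S - {a, b}"
proof -
  have "orient a b p \<noteq> 0" if "p \<in> S - {a, b}" for p
    using general_position_orient[OF assms(1-3)] assms(4) that by auto
  then show ?thesis
    unfolding left_points.simps using orient_swap[of b a] by force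
qed

lemma left_points_Int: "left_points S (a, b) \<inter> left_points S (b, a) = {}"
  unfolding left_points.simps using orient_swap[of b a] by force

lemma card_left_points_swap:
  assumes "general_position S" "finite S" "a \<in> S" "b \<in> S" "a \<noteq> b"
  shows "card (left_points S (a, b)) + card (left_points S (b, a)) + 2 = card S"
proof -
  have "card (left_points S (a, b)) + card (left_points S (b, a)) = card (S - {a, b})"
    using left_points_Un[OF assms(1,3-5)] left_points_Int[of S a b] assms(2)
    by (metis card_Un_disjoint finite_Diff finite_Un)
  moreover have "card {a, b} \<le> card S"
    using assms(2-4) by (intro card_mono) auto
  ultimately show ?thesis
    using assms(2-5) by simp
qed

definition left_side :: "complex set \<Rightarrow> complex \<Rightarrow> complex \<Rightarrow> complex set" where
  "left_side W a b = {a, b} \<union> left_points W (a, b)"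

lemma card_left_side_add:
  assumes "general_position W" "finite W" "a \<in> W" "b \<in> W" "a \<noteq> b"
  shows "card (left_side W a b) + card (left_side W b a) = card W + 2"
proof -
  have "card (left_side W a b) = card (left_points W (a, b)) + 2"
       "card (left_side W b a) = card (left_points W (b, a)) + 2"
    using assms(2,5) unfolding left_side_def left_points.simps by (simp_all add: card_insert_if)
  then show ?thesis
    using card_left_points_swap[OF assms] by simp
qed

lemma left_side_Un:
  assumes "general_position W" "a \<in> W" "b \<in> W" "a \<noteq> b"
  shows "left_side W a b \<union> left_side W b a = W"
  using left_points_Un[OF assms] assms(2,3) unfolding left_side_def by auto

lemma left_side_Int: "left_side W a b \<inter> left_side W b a = {a, b}"
  using left_points_Int[of W a b] unfolding left_side_def by auto

context
  fixes W :: "complex set" and a b c :: complex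
  assumes gp: "general_position W" and cv: "convex_position W"
    and abc: "{a, b, c} \<in> enclosing_triangles W" and c_left: "orient a b c > 0"
begin

lemma enclosing_triangle_separates:
  assumes T: "T \<subseteq> W" "card T = 3" "circle_power T a \<ge> 0" "circle_power T b \<ge> 0"
    and x: "x \<in> W" "orient a b x > 0" and y: "y \<in> W" "orient b a y > 0"
  shows "circle_power T x > 0 \<or> circle_power T y > 0"
proof (rule ccontr)
  assume "\<not> ?thesis"
  then have outside: "circle_power T x \<le> 0" "circle_power T y \<le> 0"
    by auto
  have T0: "{a, b, c} \<subseteq> W" "card {a, b, c} = 3"
    using abc unfolding enclosing_triangles_def by auto
  define h where "h p = circle_power T p - circle_power {a, b, c} p" for p
  \<comment> \<open>affine, since the quadratic parts of the two circle powers cancel\<close>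
  have y_right: "orient a b y < 0"
    using y(2) orient_swap[of b a y] by simp
  have cross: "orient x y b > 0" "orient x y a < 0"
    using convex_position_crossing[OF gp cv _ _ x(1) y(1) x(2) y_right] T0 by auto
  have "h a \<ge> 0" "h b \<ge> 0"
    using T(3,4) circle_power_vertex[OF gp T0] unfolding h_def by auto
  moreover have "h x \<le> 0"
    using outside circle_power_enclosing_nonneg[OF gp abc x(1)] unfolding h_def by simp
  ultimately have "h y \<ge> 0"
    using affine_fun_crossing[OF _ x(2) y_right cross] affine_fun_circle_power_diff
    unfolding h_def by blast
  moreover have "y \<notin> {a, b, c}"
    using y_right c_left by auto
  then have "circle_power {a, b, c} y > 0"
    using abc y(1) in_circumcircle_iff[OF gp T0] unfolding enclosing_triangles_def by blast
  ultimately show False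
    using outside unfolding h_def by simp
qed

lemma enclosing_triangle_vertices: "a \<in> W" "b \<in> W" "c \<in> W" "a \<noteq> b"
  using abc c_left unfolding enclosing_triangles_def by auto

lemma left_side_subset: "left_side W a b \<subseteq> W" "left_side W b a \<subseteq> W"
  using left_side_Un[OF gp enclosing_triangle_vertices(1,2,4)] by auto

lemma enclosing_triangles_on_one_side:
  assumes T: "T \<in> enclosing_triangles W"
  shows "T \<subseteq> left_side W a b \<or> T \<subseteq> left_side W b a"
proof (rule ccontr)
  assume "\<not> ?thesis"
  then obtain x y where "x \<in> T" "x \<notin> left_side W b a" and "y \<in> T" "y \<notin> left_side W a b"
    by blast
  moreover have T3: "T \<subseteq> W" "card T = 3"
    using T unfolding enclosing_triangles_def by auto
  ultimately have "x \<in> left_points W (a, b)" "y \<in> left_points W (b, a)"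
    using left_points_Un[OF gp enclosing_triangle_vertices(1,2,4)] unfolding left_side_def by blast+
  then have "circle_power T x > 0 \<or> circle_power T y > 0"
    using enclosing_triangle_separates[OF T3] circle_power_enclosing_nonneg[OF gp T]
      enclosing_triangle_vertices by simp
  then show False
    using circle_power_vertex[OF gp T3] \<open>x \<in> T\<close> \<open>y \<in> T\<close> by simp
qed

text \<open>A triangle enclosing one side is enclosing for \<open>W\<close>: the triangle \<open>abc\<close> itself is, and any
  other one has a vertex strictly on its own side, which by the separation lemma forces every
  point of the opposite side into its circle.\<close>
lemma enclosing_triangles_left_side:
  "enclosing_triangles (left_side W a b) \<subseteq> enclosing_triangles W"
proof
  fix T
  assume T: "T \<in> enclosing_triangles (left_side W a b)"
  then have T3: "T \<subseteq> W" "card T = 3"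
    using left_side_subset unfolding enclosing_triangles_def by auto
  have "in_circumcircle T y" if y: "y \<in> W - T" "y \<notin> left_side W a b" for y
  proof (cases "T = {a, b, c}")
    case True
    then show ?thesis
      using abc y unfolding enclosing_triangles_def by blast
  next
    case False
    have "card {a, b, c} = 3"
      using abc unfolding enclosing_triangles_def by simp
    then obtain x where x: "x \<in> T" "x \<notin> {a, b, c}"
      using False T3(2) card_subset_eq[of "{a, b, c}" T] by auto
    have "x \<in> left_points W (a, b)" "y \<in> left_points W (b, a)"
      using T x y left_side_Un[OF gp enclosing_triangle_vertices(1,2,4)]
      unfolding enclosing_triangles_def left_side_def by blast+
    moreover have "circle_power T a \<ge> 0" "circle_power T b \<ge> 0"
      using circle_power_enclosing_nonneg[OF general_position_subset[OF gp left_side_subset(1)] T]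
      unfolding left_side_def by auto
    ultimately have "circle_power T x > 0 \<or> circle_power T y > 0"
      using enclosing_triangle_separates[OF T3] by simp
    then show ?thesis
      using circle_power_vertex[OF gp T3 x(1)] in_circumcircle_iff[OF gp T3] by simp
  qed
  then show "T \<in> enclosing_triangles W"
    using T T3 unfolding enclosing_triangles_def by blast
qed

lemma enclosing_triangles_right_side:
  "enclosing_triangles (left_side W b a) \<subseteq> enclosing_triangles W"
proof
  fix T
  assume T: "T \<in> enclosing_triangles (left_side W b a)"
  then have T3: "T \<subseteq> W" "card T = 3"
    using left_side_subset unfolding enclosing_triangles_def by auto
  have "in_circumcircle T x" if x: "x \<in> W - T" "x \<notin> left_side W b a" for x
  proof -
    have "\<not> T \<subseteq> {a, b}"
      using T3(2) card_mono[of "{a, b}" T] by (cases "a = b") auto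
    then obtain y where y: "y \<in> T" "y \<notin> {a, b}"
      by blast
    have "x \<in> left_points W (a, b)" "y \<in> left_points W (b, a)"
      using T x y left_side_Un[OF gp enclosing_triangle_vertices(1,2,4)]
      unfolding enclosing_triangles_def left_side_def by blast+
    moreover have "circle_power T a \<ge> 0" "circle_power T b \<ge> 0"
      using circle_power_enclosing_nonneg[OF general_position_subset[OF gp left_side_subset(2)] T]
      unfolding left_side_def by auto
    ultimately have "circle_power T x > 0 \<or> circle_power T y > 0"
      using enclosing_triangle_separates[OF T3] by simp
    then show ?thesis
      using circle_power_vertex[OF gp T3 y(1)] in_circumcircle_iff[OF gp T3] by simp
  qed
  then show "T \<in> enclosing_triangles W"
    using T T3 unfolding enclosing_triangles_def by blast
qed

lemma card_enclosing_triangles_split: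
  assumes "finite W"
  shows "card (enclosing_triangles W)
    = card (enclosing_triangles (left_side W a b)) + card (enclosing_triangles (left_side W b a))"
proof -
  have "enclosing_triangles W \<subseteq> enclosing_triangles (left_side W a b) \<union> enclosing_triangles (left_side W b a)"
  proof
    fix T
    assume T: "T \<in> enclosing_triangles W"
    then show "T \<in> enclosing_triangles (left_side W a b) \<union> enclosing_triangles (left_side W b a)"
      using enclosing_triangles_on_one_side[OF T] enclosing_triangles_subset[OF T] left_side_subset
      by blast
  qed
  then have "enclosing_triangles W = enclosing_triangles (left_side W a b) \<union> enclosing_triangles (left_side W b a)"
    using enclosing_triangles_left_side enclosing_triangles_right_side by blast
  moreover have "\<not> T \<subseteq> {a, b}" if "card T = 3" for T :: "complex set"
    using that card_mono[of "{a, b}" T] by (cases "a = b") auto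
  then have "enclosing_triangles (left_side W a b) \<inter> enclosing_triangles (left_side W b a) = {}"
    using left_side_Int[of W a b] unfolding enclosing_triangles_def by auto
  moreover have "finite (left_side W a b)" "finite (left_side W b a)"
    using assms left_side_subset finite_subset by auto
  ultimately show ?thesis
    by (simp add: card_Un_disjoint finite_enclosing_triangles)
qed

lemma card_left_side_bounds:
  assumes fin: "finite W" and d: "d \<in> W" "orient b a d > 0"
  shows "3 \<le> card (left_side W a b)" "card (left_side W a b) < card W"
    and "3 \<le> card (left_side W b a)" "card (left_side W b a) < card W"
proof -
  have ab: "a \<noteq> b" "c \<noteq> a" "c \<noteq> b" "d \<noteq> a" "d \<noteq> b"
    using enclosing_triangle_vertices c_left d(2) by auto
  have "left_side W a b \<subseteq> W - {d}" "left_side W b a \<subseteq> W - {c}"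
    using left_side_subset d c_left orient_swap[of a b]
    unfolding left_side_def left_points.simps by auto
  then show "card (left_side W a b) < card W" "card (left_side W b a) < card W"
    using fin d(1) enclosing_triangle_vertices(3)
    by (auto intro: le_less_trans[OF card_mono card_Diff1_less])
  have "{a, b, c} \<subseteq> left_side W a b" "{a, b, d} \<subseteq> left_side W b a"
    using c_left d enclosing_triangle_vertices unfolding left_side_def left_points.simps by auto
  then have "card {a, b, c} \<le> card (left_side W a b)" "card {a, b, d} \<le> card (left_side W b a)"
    using fin left_side_subset by (auto intro: card_mono finite_subset)
  moreover have "card {a, b, c} = 3" "card {a, b, d} = 3"
    using ab by auto
  ultimately show "3 \<le> card (left_side W a b)" "3 \<le> card (left_side W b a)"
    by simp_all
qed

end

lemma card_less_not_subset: "finite A \<Longrightarrow> card A < card W \<Longrightarrow> \<not> W \<subseteq> A"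
  using card_mono by (meson not_le)

lemma enclosing_triangle_with_chord:
  assumes gp: "general_position W" and cv: "convex_position W" and fin: "finite W"
    and card: "card W \<ge> 4"
  obtains a b c d where "{a, b, c} \<in> enclosing_triangles W" "orient a b c > 0"
    "d \<in> W" "orient b a d > 0"
proof -
  obtain a where a: "a \<in> W"
    using card_less_not_subset[of "{}" W] card by auto
  obtain b' where "b' \<in> W" "b' \<noteq> a"
    using card_less_not_subset[of "{a}" W] card by auto
  then obtain b where ab: "(a, b) \<in> hull_edges W"
    using hull_edge_from[OF gp cv fin a] by blast
  then have a_b: "b \<in> W" "a \<noteq> b" and left: "\<And>p. p \<in> W - {a, b} \<Longrightarrow> orient a b p > 0"
    unfolding hull_edges_def by auto
  have "card {a, b} < card W"
    using card a_b(2) by simp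
  then have "W - {a, b} \<noteq> {}"
    using card_less_not_subset[of "{a, b}" W] by blast
  then obtain q where q: "q \<in> W - {a, b}" and abq: "{a, b, q} \<in> enclosing_triangles W"
    using hull_edge_enclosing_triangle[OF gp fin ab] by blast
  have "card {a, b, q} < card W"
    using card a_b(2) q by (simp add: card_insert_if)
  then obtain d where d: "d \<in> W" "d \<notin> {a, b, q}"
    using card_less_not_subset[of "{a, b, q}" W] by blast
  have "orient q b d \<noteq> 0" "orient a q d \<noteq> 0"
    using general_position_orient[OF gp] a a_b q d by auto
  moreover have "\<not> in_triangle d a b q"
    using cv a a_b(1) q d(1) unfolding convex_position_def by blast
  then have "\<not> (orient b q d > 0 \<and> orient q a d > 0)"
    using left[of d] d unfolding in_triangle_def by auto
  ultimately have "orient q b d > 0 \<or> orient a q d > 0"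
    using orient_swap[of q b d] orient_swap[of a q d] by linarith
  moreover have "{b, q, a} = {a, b, q}" "{q, a, b} = {a, b, q}"
    by auto
  moreover have "orient b q a > 0" "orient q a b > 0"
    using left[OF q] orient_rotate[of a b q] orient_rotate[of b q a] by auto
  ultimately show ?thesis
    using that[of b q a d] that[of q a b d] abq d(1) by auto
qed

lemma card_enclosing_triangles_convex:
  assumes "general_position W" "convex_position W" "finite W" "card W \<ge> 3"
  shows "card (enclosing_triangles W) + 2 = card W"
  using assms
proof (induction "card W" arbitrary: W rule: less_induct)
  case less
  note gp = less.prems(1) and cv = less.prems(2) and fin = less.prems(3)
  show ?case
  proof (cases "card W = 3")
    case True
    then have "T = W" if "T \<subseteq> W" "card T = 3" for T
      using card_subset_eq[OF fin that(1)] that(2) by simp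
    with True have "enclosing_triangles W = {W}"
      unfolding enclosing_triangles_def by auto
    with True show ?thesis
      by simp
  next
    case False
    with less.prems(4) have "card W \<ge> 4"
      by simp
    then obtain a b c d where abc: "{a, b, c} \<in> enclosing_triangles W" "orient a b c > 0"
      and d: "d \<in> W" "orient b a d > 0"
      by (rule enclosing_triangle_with_chord[OF gp cv fin])
    let ?L = "left_side W a b" and ?R = "left_side W b a"
    have IH: "card (enclosing_triangles V) + 2 = card V"
      if "V \<subseteq> W" "card V < card W" "card V \<ge> 3" for V
      using less.hyps[OF that(2) general_position_subset[OF gp that(1)]
        convex_position_subset[OF cv that(1)] finite_subset[OF that(1) fin] that(3)] .
    have ab: "a \<in> W" "b \<in> W" "a \<noteq> b"
      using enclosing_triangle_vertices[OF gp cv abc] by auto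
    note bounds = card_left_side_bounds[OF gp cv abc fin d]
    show ?thesis
      using card_enclosing_triangles_split[OF gp cv abc fin] card_left_side_add[OF gp fin ab]
        IH[OF left_side_subset(1)[OF gp cv abc] bounds(2,1)]
        IH[OF left_side_subset(2)[OF gp cv abc] bounds(4,3)]
      by linarith
  qed
qed

lemma card_enclosing_triangles:
  assumes "general_position W" "finite W" "card W \<ge> 3"
  shows "card (enclosing_triangles W) + 2 = card (hull_edges W)"
  using assms
proof (induction "card W" arbitrary: W rule: less_induct)
  case less
  note gp = less.prems(1) and fin = less.prems(2)
  show ?case
  proof (cases "convex_position W")
    case True
    then show ?thesis
      using card_enclosing_triangles_convex[OF gp True fin less.prems(3)]
        card_hull_edges_convex[OF gp True fin] less.prems(3) by simp
  next
    case False
    then obtain p x y z where pxyz: "p \<in> W" "x \<in> W" "y \<in> W" "z \<in> W"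
      and p: "in_triangle p x y z"
      unfolding convex_position_def by blast
    have "{x, y, z} \<subseteq> W - {p}" "card {x, y, z} = 3"
      using pxyz in_triangle_distinct[OF p] by auto
    then have "card (W - {p}) \<ge> 3"
      using fin card_mono[of "W - {p}" "{x, y, z}"] by simp
    moreover have "card (W - {p}) < card W"
      using card_Diff1_less[OF fin pxyz(1)] .
    ultimately have "card (enclosing_triangles (W - {p})) + 2 = card (hull_edges (W - {p}))"
      using less.hyps general_position_subset[OF gp] fin by blast
    then show ?thesis
      using enclosing_triangles_remove_interior[OF gp pxyz p]
        hull_edges_remove_interior[OF pxyz(2-4) p] by simp
  qed
qed

section \<open>Counting\<close>

lemma card_supersets:
  assumes "finite A" "finite B" "A \<inter> B = {}"
  shows "card {W. A \<subseteq> W \<and> W \<subseteq> A \<union> B \<and> card W = card A + k} = card B choose k"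
proof -
  have "bij_betw (\<lambda>K. A \<union> K) {K. K \<subseteq> B \<and> card K = k} {W. A \<subseteq> W \<and> W \<subseteq> A \<union> B \<and> card W = card A + k}"
  proof (rule bij_betw_byWitness[where f' = "\<lambda>W. W - A"])
    show "(\<lambda>K. A \<union> K) ` {K. K \<subseteq> B \<and> card K = k} \<subseteq> {W. A \<subseteq> W \<and> W \<subseteq> A \<union> B \<and> card W = card A + k}"
    proof
      fix W
      assume "W \<in> (\<lambda>K. A \<union> K) ` {K. K \<subseteq> B \<and> card K = k}"
      then obtain K where K: "K \<subseteq> B" "card K = k" "W = A \<union> K"
        by blast
      moreover have "card (A \<union> K) = card A + card K"
        using assms K(1) by (intro card_Un_disjoint) (auto intro: finite_subset)
      ultimately show "W \<in> {W. A \<subseteq> W \<and> W \<subseteq> A \<union> B \<and> card W = card A + k}"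
        by auto
    qed
    show "(\<lambda>W. W - A) ` {W. A \<subseteq> W \<and> W \<subseteq> A \<union> B \<and> card W = card A + k} \<subseteq> {K. K \<subseteq> B \<and> card K = k}"
      using assms by (auto simp: card_Diff_subset)
  qed (use assms in auto)
  then have "card {K. K \<subseteq> B \<and> card K = k} = card {W. A \<subseteq> W \<and> W \<subseteq> A \<union> B \<and> card W = card A + k}"
    by (rule bij_betw_same_card)
  then show ?thesis
    using n_subsets[OF assms(2)] by simp
qed

lemma sum_choose_mult_choose:
  "(\<Sum>i\<le>m. (i choose k) * ((m - i) choose j)) = Suc m choose (k + j + 1)"
proof (induction j arbitrary: m)
  case 0
  show ?case
    using sum_choose_upper[of k m] by simp
next
  case (Suc j)
  show ?case
  proof (induction m)
    case (Suc m)
    have "(\<Sum>i\<le>Suc m. (i choose k) * ((Suc m - i) choose Suc j))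
        = (\<Sum>i\<le>m. (i choose k) * ((m - i) choose Suc j) + (i choose k) * ((m - i) choose j))"
      by (simp add: Suc_diff_le algebra_simps)
    also have "\<dots> = Suc (Suc m) choose (k + Suc j + 1)"
      using Suc.IH \<open>\<And>m. _ = Suc m choose (k + j + 1)\<close>[of m] by (simp add: sum.distrib)
    finally show ?case .
  qed simp
qed

lemma sum_choose_by_value:
  assumes "finite A" "\<And>x. x \<in> A \<Longrightarrow> f x \<le> N"
  shows "(\<Sum>x\<in>A. f x choose k) = (\<Sum>i\<le>N. card {x \<in> A. f x = i} * (i choose k))"
proof -
  have "(\<Sum>x\<in>A. f x choose k) = (\<Sum>i\<le>N. \<Sum>x\<in>{x \<in> A. f x = i}. f x choose k)"
    using assms by (intro sum.group[symmetric]) auto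
  also have "\<dots> = (\<Sum>i\<le>N. card {x \<in> A. f x = i} * (i choose k))"
    by (intro sum.cong refl) simp
  finally show ?thesis .
qed

lemma sum_choose_Suc_by_threshold:
  assumes "finite A" "\<And>x. x \<in> A \<Longrightarrow> f x \<le> Suc N"
  shows "(\<Sum>x\<in>A. f x choose Suc k) = (\<Sum>i\<le>N. card {x \<in> A. i < f x} * (i choose k))"
proof -
  have "f x choose Suc k = (\<Sum>i\<le>N. if i < f x then i choose k else 0)" if "x \<in> A" for x
  proof -
    have "{i \<in> {..N}. i < f x} = {..<f x}"
      using assms(2)[OF that] by auto
    then have "(\<Sum>i\<le>N. if i < f x then i choose k else 0) = (\<Sum>i<f x. i choose k)"
      by (simp add: sum.inter_filter[symmetric])
    also have "\<dots> = f x choose Suc k"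
      by (cases "f x") (simp_all add: lessThan_Suc_atMost sum_choose_upper)
    finally show ?thesis ..
  qed
  then have "(\<Sum>x\<in>A. f x choose Suc k) = (\<Sum>i\<le>N. \<Sum>x\<in>A. if i < f x then i choose k else 0)"
    by (simp add: sum.swap[of _ A])
  also have "\<dots> = (\<Sum>i\<le>N. card {x \<in> A. i < f x} * (i choose k))"
    using assms(1) by (simp add: sum.inter_filter[symmetric])
  finally show ?thesis .
qed

lemma binomial_moments_zero:
  fixes X :: "nat \<Rightarrow> int"
  assumes moments: "\<And>k. k \<le> N \<Longrightarrow> (\<Sum>i\<le>N. X i * int (i choose k)) = 0" and "i \<le> N"
  shows "X i = 0"
proof (rule ccontr)
  assume "X i \<noteq> 0"
  define m where "m = Max {i. i \<le> N \<and> X i \<noteq> 0}"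
  have "m \<in> {i. i \<le> N \<and> X i \<noteq> 0}"
    unfolding m_def using \<open>X i \<noteq> 0\<close> assms(2) by (intro Max_in) auto
  then have m: "m \<le> N" "X m \<noteq> 0"
    by auto
  have "X j = 0" if "m < j" "j \<le> N" for j
    using that Max_ge[of "{i. i \<le> N \<and> X i \<noteq> 0}" j] unfolding m_def by fastforce
  then have "(\<Sum>i\<le>N. X i * int (i choose m)) = (\<Sum>i\<le>N. if i = m then X m else 0)"
    by (intro sum.cong refl) (auto simp: not_less_iff_gr_or_eq)
  also have "\<dots> = X m"
    using m(1) by simp
  finally show False
    using moments[OF m(1)] m(2) by simp
qed

definition distinct_pairs :: "'a set \<Rightarrow> ('a \<times> 'a) set" where
  "distinct_pairs S = {(a, b). a \<in> S \<and> b \<in> S \<and> a \<noteq> b}"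

lemma finite_distinct_pairs: "finite S \<Longrightarrow> finite (distinct_pairs S)"
  by (rule finite_subset[of _ "S \<times> S"]) (auto simp: distinct_pairs_def)

lemma card_distinct_pairs:
  assumes "finite S"
  shows "card (distinct_pairs S) = card S * (card S - 1)"
proof -
  have "distinct_pairs S = S \<times> S - (\<lambda>x. (x, x)) ` S"
    unfolding distinct_pairs_def by auto
  moreover have "card ((\<lambda>x. (x, x)) ` S) = card S"
    by (rule card_image) (auto intro: inj_onI)
  ultimately show ?thesis
    using assms by (simp add: card_Diff_subset card_cartesian_product image_subset_iff diff_mult_distrib2)
qed

lemma sum_card_enclosing_triangles:
  assumes gp: "general_position S" and fin: "finite S"
  shows "(\<Sum>W | W \<subseteq> S \<and> card W = k + 3. card (enclosing_triangles W))
       = (\<Sum>T | T \<subseteq> S \<and> card T = 3. circle_order S T choose k)"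
proof -
  let ?A = "{W. W \<subseteq> S \<and> card W = k + 3}" and ?B = "{T. T \<subseteq> S \<and> card T = 3}"
  have fin_AB: "finite ?A" "finite ?B"
    using fin by (auto intro: finite_subset[of _ "Pow S"])
  have "(\<Sum>W\<in>?A. card (enclosing_triangles W)) = (\<Sum>W\<in>?A. card {T \<in> ?B. T \<in> enclosing_triangles W})"
    unfolding enclosing_triangles_def by (intro sum.cong refl arg_cong[where f = card]) auto
  also have "\<dots> = (\<Sum>T\<in>?B. circle_order S T choose k)"
  proof (intro sum_multicount_gen ballI fin_AB)
    fix T
    assume T: "T \<in> ?B"
    let ?I = "{p \<in> S. in_circumcircle T p}"
    have "{W \<in> ?A. T \<in> enclosing_triangles W} = {W. T \<subseteq> W \<and> W \<subseteq> T \<union> ?I \<and> card W = card T + k}"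
      using T unfolding enclosing_triangles_def by auto
    also have "card \<dots> = card ?I choose k"
      using T fin circle_power_vertex[OF gp] in_circumcircle_iff[OF gp]
      by (intro card_supersets) (auto intro: finite_subset)
    also have "card ?I = circle_order S T"
      unfolding circle_order_def in_circumcircle_def ..
    finally show "card {W \<in> ?A. T \<in> enclosing_triangles W} = circle_order S T choose k" .
  qed
  finally show ?thesis .
qed

lemma sum_card_hull_edges:
  assumes fin: "finite S"
  shows "(\<Sum>W | W \<subseteq> S \<and> card W = j + 2. card (hull_edges W))
       = (\<Sum>e\<in>distinct_pairs S. card (left_points S e) choose j)"
proof -
  let ?A = "{W. W \<subseteq> S \<and> card W = j + 2}"
  have fin_A: "finite ?A"
    using fin by (auto intro: finite_subset[of _ "Pow S"])
  have "(\<Sum>W\<in>?A. card (hull_edges W)) = (\<Sum>W\<in>?A. card {e \<in> distinct_pairs S. e \<in> hull_edges W})"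
    unfolding hull_edges_def distinct_pairs_def by (intro sum.cong refl arg_cong[where f = card]) auto
  also have "\<dots> = (\<Sum>e\<in>distinct_pairs S. card (left_points S e) choose j)"
  proof (intro sum_multicount_gen ballI fin_A finite_distinct_pairs fin)
    fix e
    assume "e \<in> distinct_pairs S"
    then obtain a b where ab: "e = (a, b)" "a \<in> S" "b \<in> S" "a \<noteq> b"
      unfolding distinct_pairs_def by auto
    have "{W \<in> ?A. e \<in> hull_edges W}
        = {W. {a, b} \<subseteq> W \<and> W \<subseteq> {a, b} \<union> left_points S (a, b) \<and> card W = card {a, b} + j}"
      using ab unfolding hull_edges_def left_points.simps by auto
    also have "card \<dots> = card (left_points S (a, b)) choose j"
      using fin unfolding left_points.simps by (intro card_supersets) auto
    finally show "card {W \<in> ?A. e \<in> hull_edges W} = card (left_points S e) choose j"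
      using ab(1) by simp
  qed
  finally show ?thesis .
qed

lemma circle_order_le:
  assumes "general_position S" "finite S" "T \<subseteq> S" "card T = 3"
  shows "circle_order S T \<le> card S - 3"
proof -
  have "{p \<in> S. in_circumcircle T p} \<subseteq> S - T"
    using circle_power_vertex[OF assms(1,3,4)] in_circumcircle_iff[OF assms(1,3,4)] by auto
  then have "circle_order S T \<le> card (S - T)"
    unfolding circle_order_def in_circumcircle_def using assms(2) by (simp add: card_mono)
  then show ?thesis
    using assms(2-4) by (simp add: card_Diff_subset finite_subset)
qed

lemma card_left_points_le:
  assumes "finite S" "e \<in> distinct_pairs S"
  shows "card (left_points S e) \<le> card S - 2"
proof -
  obtain a b where e: "e = (a, b)" "a \<in> S" "b \<in> S" "a \<noteq> b"
    using assms(2) unfolding distinct_pairs_def by auto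
  then have "card (left_points S e) \<le> card (S - {a, b})"
    using assms(1) by (intro card_mono) auto
  then show ?thesis
    using e assms(1) by simp
qed

lemma circle_order_moments:
  assumes gp: "general_position S" and fin: "finite S"
  shows "(\<Sum>T | T \<subseteq> S \<and> card T = 3. circle_order S T choose k) + 2 * (card S choose (k + 3))
       = (\<Sum>e\<in>distinct_pairs S. card (left_points S e) choose Suc k)"
proof -
  let ?A = "{W. W \<subseteq> S \<and> card W = k + 3}"
  have "card (hull_edges W) = card (enclosing_triangles W) + 2" if "W \<in> ?A" for W
    using that card_enclosing_triangles general_position_subset[OF gp] finite_subset[OF _ fin]
    by (metis (mono_tags, lifting) le_add2 mem_Collect_eq)
  then have "(\<Sum>W\<in>?A. card (hull_edges W)) = (\<Sum>W\<in>?A. card (enclosing_triangles W) + 2)"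
    by (intro sum.cong) auto
  also have "\<dots> = (\<Sum>W\<in>?A. card (enclosing_triangles W)) + 2 * card ?A"
    by (subst sum.distrib) simp
  also have "\<dots> = (\<Sum>T | T \<subseteq> S \<and> card T = 3. circle_order S T choose k) + 2 * (card S choose (k + 3))"
    using sum_card_enclosing_triangles[OF gp fin, of k] n_subsets[OF fin, of "k + 3"] by simp
  moreover have "(\<Sum>W\<in>?A. card (hull_edges W)) = (\<Sum>e\<in>distinct_pairs S. card (left_points S e) choose Suc k)"
    using sum_card_hull_edges[OF fin, of "Suc k"] by (simp add: numeral_3_eq_3)
  ultimately show ?thesis
    by simp
qed

lemma sum_choose_two_mult_choose:
  "(\<Sum>i\<le>m. ((m + 2 - i) choose 2) * (i choose k)) = (m + 3) choose (k + 3)"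
  using sum_choose_mult_choose[of k "m + 2" 2]
  by (simp del: binomial_Suc_Suc add: mult.commute binomial_eq_0 numeral_3_eq_3)

lemma two_mult_choose_two: "2 * (n choose 2) = n * (n - 1)"
proof (induction n)
  case (Suc n)
  have "Suc n choose 2 = (n choose 2) + n"
    by (simp add: numeral_2_eq_2)
  with Suc show ?case
    by (cases n) (auto simp: algebra_simps)
qed simp

lemma circle_count_left_points_threshold:
  assumes gp: "general_position S" and fin: "finite S" and n: "card S = m + 3" and "j \<le> m"
  shows "circle_count S j + 2 * ((m + 2 - j) choose 2)
       = card {e \<in> distinct_pairs S. j < card (left_points S e)}"
proof -
  let ?B = "{T. T \<subseteq> S \<and> card T = 3}"
  define c where "c i = circle_count S i + 2 * ((m + 2 - i) choose 2)" for i
  define E where "E i = card {e \<in> distinct_pairs S. i < card (left_points S e)}" for i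
  have E_bound: "card (left_points S e) \<le> Suc m" if "e \<in> distinct_pairs S" for e
    using card_left_points_le[OF fin that] n by simp
  have "(\<Sum>i\<le>m. c i * (i choose k)) = (\<Sum>i\<le>m. E i * (i choose k))" for k
  proof -
    have count: "(\<Sum>i\<le>m. circle_count S i * (i choose k)) = (\<Sum>T\<in>?B. circle_order S T choose k)"
      unfolding circle_count_def
      using sum_choose_by_value[of ?B "circle_order S" m k] fin circle_order_le[OF gp fin] n
      by (simp add: finite_subset[of _ "Pow S"] conj_assoc)
    have pairs: "(\<Sum>i\<le>m. E i * (i choose k)) = (\<Sum>e\<in>distinct_pairs S. card (left_points S e) choose Suc k)"
      unfolding E_def by (rule sum_choose_Suc_by_threshold[OF finite_distinct_pairs[OF fin] E_bound, symmetric])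
    have vandermonde: "(\<Sum>i\<le>m. ((m + 2 - i) choose 2) * (i choose k)) = card S choose (k + 3)"
      unfolding n by (rule sum_choose_two_mult_choose)
    have "(\<Sum>i\<le>m. c i * (i choose k))
        = (\<Sum>i\<le>m. circle_count S i * (i choose k)) + 2 * (\<Sum>i\<le>m. ((m + 2 - i) choose 2) * (i choose k))"
      unfolding c_def by (simp add: sum.distrib sum_distrib_left add_mult_distrib mult.assoc)
    also have "\<dots> = (\<Sum>T\<in>?B. circle_order S T choose k) + 2 * (card S choose (k + 3))"
      unfolding count vandermonde ..
    also have "\<dots> = (\<Sum>e\<in>distinct_pairs S. card (left_points S e) choose Suc k)"
      by (rule circle_order_moments[OF gp fin])
    finally show ?thesis
      unfolding pairs .
  qed
  moreover have "(\<Sum>i\<le>m. (int (c i) - int (E i)) * int (i choose k))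
      = int (\<Sum>i\<le>m. c i * (i choose k)) - int (\<Sum>i\<le>m. E i * (i choose k))" for k
    by (simp add: left_diff_distrib sum_subtractf)
  ultimately have "(\<Sum>i\<le>m. (int (c i) - int (E i)) * int (i choose k)) = 0" for k
    by simp
  then have "int (c j) - int (E j) = 0"
    using binomial_moments_zero[of m "\<lambda>i. int (c i) - int (E i)"] assms(4) by blast
  then show ?thesis
    unfolding c_def E_def by simp
qed

lemma card_left_points_reverse:
  assumes "general_position S" "finite S" "e \<in> distinct_pairs S"
  shows "prod.swap e \<in> distinct_pairs S"
    and "card (left_points S (prod.swap e)) + card (left_points S e) + 2 = card S"
proof -
  obtain a b where "e = (a, b)" "a \<in> S" "b \<in> S" "a \<noteq> b"
    using assms(3) unfolding distinct_pairs_def by auto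
  then show "prod.swap e \<in> distinct_pairs S"
    and "card (left_points S (prod.swap e)) + card (left_points S e) + 2 = card S"
    using card_left_points_swap[OF assms(1,2), of b a] by (simp_all add: distinct_pairs_def)
qed

lemma swap_left_points_threshold:
  assumes gp: "general_position S" and fin: "finite S" and n: "card S = i + j + 3"
  shows "prod.swap ` {e \<in> distinct_pairs S. j < card (left_points S e)}
       = {e \<in> distinct_pairs S. card (left_points S e) \<le> i}"
proof
  show "prod.swap ` {e \<in> distinct_pairs S. j < card (left_points S e)}
      \<subseteq> {e \<in> distinct_pairs S. card (left_points S e) \<le> i}"
    using card_left_points_reverse[OF gp fin] n by fastforce
  show "{e \<in> distinct_pairs S. card (left_points S e) \<le> i}
      \<subseteq> prod.swap ` {e \<in> distinct_pairs S. j < card (left_points S e)}"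
  proof
    fix e
    assume e: "e \<in> {e \<in> distinct_pairs S. card (left_points S e) \<le> i}"
    then have "prod.swap e \<in> {e \<in> distinct_pairs S. j < card (left_points S e)}"
      using card_left_points_reverse[OF gp fin, of e] n by auto
    then show "e \<in> prod.swap ` {e \<in> distinct_pairs S. j < card (left_points S e)}"
      using image_eqI[of e prod.swap "prod.swap e"] by simp
  qed
qed

lemma card_filter_add_card_filter_not:
  "finite A \<Longrightarrow> card {x \<in> A. P x} + card {x \<in> A. \<not> P x} = card A"
  by (subst card_Un_disjoint[symmetric]) (auto intro: arg_cong[where f = card])

lemma card_left_points_threshold_pair:
  assumes gp: "general_position S" and fin: "finite S" and n: "card S = i + j + 3"
  shows "card {e \<in> distinct_pairs S. i < card (left_points S e)}
       + card {e \<in> distinct_pairs S. j < card (left_points S e)} = card S * (card S - 1)"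
proof -
  have "card {e \<in> distinct_pairs S. j < card (left_points S e)}
      = card {e \<in> distinct_pairs S. card (left_points S e) \<le> i}"
    unfolding swap_left_points_threshold[OF assms, symmetric] by (simp add: card_image)
  then show ?thesis
    using card_filter_add_card_filter_not[OF finite_distinct_pairs[OF fin],
        of "\<lambda>e. i < card (left_points S e)"] card_distinct_pairs[OF fin]
    by (simp add: not_less)
qed

theorem mainTheorem5:
  fixes S :: "complex set" and n i :: nat
  assumes "finite S" and "card S = n" and "n \<ge> 3"
    and "general_position S"
    and "i \<le> n - 3"
  shows "circle_count S i + circle_count S (n - i - 3) = 2 * (i + 1) * (n - 2 - i)"
proof -
  define m where "m = n - i - 3"
  have n: "card S = i + m + 3" "card S = m + i + 3"
    using assms(2,3,5) unfolding m_def by simp_all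
  have "circle_count S i + 2 * ((m + 2) choose 2) + (circle_count S m + 2 * ((i + 2) choose 2))
      = n * (n - 1)"
    using circle_count_left_points_threshold[OF assms(4,1) n(1), of i] circle_count_left_points_threshold[OF assms(4,1) n(2), of m]
      card_left_points_threshold_pair[OF assms(4,1) n(1)] assms(2) by simp
  moreover have "2 * ((m + 2) choose 2) = (m + 2) * (m + 1)" "2 * ((i + 2) choose 2) = (i + 2) * (i + 1)"
    using two_mult_choose_two[of "m + 2"] two_mult_choose_two[of "i + 2"] by simp_all
  moreover have "n * (n - 1) = (m + 2) * (m + 1) + (i + 2) * (i + 1) + 2 * (i + 1) * (m + 1)"
    using n(1) assms(2) by (simp add: algebra_simps)
  ultimately show ?thesis
    unfolding m_def[symmetric] using n(1) assms(2) by (simp add: algebra_simps)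
qed

end
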